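(* Let $d\ge2$, $1\le k<d$, $D=\operatorname{diag}(1,\dots,1,0,\dots,0)\in\mathbb{R}^{d\times d}$ with $k$ ones, and $C\in\mathbb{R}^{d\times d}$ satisfy condition (A). Let $K$ be the symmetric positive definite solution of $2D=CK+KC^T$, $Q:=KC^TK^{-1}$, and $\mu:=\min\{\operatorname{Re}\lambda:\lambda \text{ eigenvalue of } C\}$ (so $\mu>0$). Let $\lambda_1,\dots,\lambda_{m_0}$ be the eigenvalues of $C$ with real part $\mu$. (i) If every $\lambda_m$, $1\le m\le m_0$, is non-defective, then there exists a symmetric positive definite $P\in\mathbb{R}^{d\times d}$ with $QP+PQ^T\geq 2\mu P$. (ii) If some $\lambda_m$, $1\le m\le m_0$, is defective, then for every $\varepsilon>0$ there exists a symmetric positive definite $P=P(\varepsilon)\in\mathbb{R}^{d\times d}$ with $QP+PQ^T\ge2(\mu-\varepsilon)P$. (iii) For any such matrix $P$, any admissible generating function $\psi$ and any $\psi$-compatible function $f_0$, one has $S_\psi(f_0)<\infty$.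
   Context: Condition (A): (a) no non-trivial subspace of $\ker D$ is invariant under $C^T$; (b) all eigenvalues of $C$ have positive real part. An eigenvalue is defective if its geometric multiplicity is strictly less than its algebraic multiplicity. Matrix inequalities are in the sense of quadratic forms. $f_\infty(x)=(2\pi)^{-d/2}(\det K)^{-1/2}\exp(-x^TK^{-1}x/2)$. A function $\psi\not\equiv0$, $\psi\in C([0,\infty))\cap C^4((0,\infty))$, is an admissible generating function if $\psi(1)=\psi'(1)=0$, $\psi''\ge0$ and $(\psi''')^2\le\frac12\psi''\psi^{IV}$ on $(0,\infty)$ (for the quadratic function $\psi(s)=(s-1)^2$ one works on all of $\mathbb{R}$ and admits signed $f$). For $f_0\in L^1(\mathbb{R}^d)$, $f_0\ge0$ (any sign if $\psi$ quadratic), $\int f_0=1$, set $w(x):=\int_1^{f_0(x)/f_\infty(x)}\sqrt{\psi''(s)}\,ds$; $f_0$ is $\psi$-compatible if $\nabla w\in L^2(\mathbb{R}^d,f_\infty)$. Then $S_\psi(f_0):=\int_{\mathbb{R}^d}(\nabla w)^TP(\nabla w)f_\infty\,dx$. *)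

theory Defs
  imports "HOL-Analysis.Analysis" "HOL-Computational_Algebra.Polynomial"
begin

text \<open>D = diag(1,...,1,0,...,0) with k ones; the index type is well-ordered so that
  "the first k indices" makes sense.\<close>
definition Dmat :: "nat \<Rightarrow> real^('n::{finite,wellorder})^('n::{finite,wellorder})" where
  "Dmat k = (\<chi> i j. if i = j \<and> card {l. l < i} < k then 1 else 0)"

definition cmat :: "real^'n^'m \<Rightarrow> complex^'n^'m" where
  "cmat A = (\<chi> i j. complex_of_real (A $ i $ j))"

definition c_eigenvalue :: "real^'n^'n \<Rightarrow> complex \<Rightarrow> bool" where
  "c_eigenvalue A lam \<longleftrightarrow> (\<exists>v. v \<noteq> 0 \<and> cmat A *v v = lam *s v)"

definition cspec :: "real^'n^'n \<Rightarrow> complex set" where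
  "cspec A = {lam. c_eigenvalue A lam}"

definition charpoly :: "real^'n^'n \<Rightarrow> complex poly" where
  "charpoly A = det (\<chi> i j. (if i = j then [:0, 1:] else 0) - [:complex_of_real (A $ i $ j):])"

definition alg_mult :: "real^'n^'n \<Rightarrow> complex \<Rightarrow> nat" where
  "alg_mult A lam = order lam (charpoly A)"

definition geom_mult :: "real^'n^'n \<Rightarrow> complex \<Rightarrow> nat" where
  "geom_mult A lam = vec.dim {v :: complex^'n. cmat A *v v = lam *s v}"

definition defective :: "real^'n^'n \<Rightarrow> complex \<Rightarrow> bool" where
  "defective A lam \<longleftrightarrow> geom_mult A lam < alg_mult A lam"

definition null_space :: "real^'n^'m \<Rightarrow> (real^'n) set" where
  "null_space A = {x. A *v x = 0}"

definition condA :: "real^'n^'n \<Rightarrow> real^'n^'n \<Rightarrow> bool" where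
  "condA D C \<longleftrightarrow>
     (\<forall>V. subspace V \<and> V \<subseteq> null_space D \<and> V \<noteq> {0} \<longrightarrow> \<not> ((\<lambda>x. transpose C *v x) ` V \<subseteq> V))
   \<and> (\<forall>lam \<in> cspec C. Re lam > 0)"

definition sym_mat :: "real^'n^'n \<Rightarrow> bool" where
  "sym_mat A \<longleftrightarrow> transpose A = A"

definition pos_def :: "real^'n^'n \<Rightarrow> bool" where
  "pos_def A \<longleftrightarrow> sym_mat A \<and> (\<forall>x. x \<noteq> 0 \<longrightarrow> x \<bullet> (A *v x) > 0)"

definition mat_ge :: "real^'n^'n \<Rightarrow> real^'n^'n \<Rightarrow> bool" where
  "mat_ge A B \<longleftrightarrow> (\<forall>x. x \<bullet> ((A - B) *v x) \<ge> 0)"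

definition Qmat :: "real^'n^'n \<Rightarrow> real^'n^'n \<Rightarrow> real^'n^'n" where
  "Qmat K C = K ** transpose C ** matrix_inv K"

definition mu :: "real^'n^'n \<Rightarrow> real" where
  "mu C = Min (Re ` cspec C)"

definition finf :: "real^'n^'n \<Rightarrow> real^'n \<Rightarrow> real" where
  "finf K x = (2 * pi) powr (- real CARD('n) / 2) * (det K) powr (-1/2)
              * exp (- (x \<bullet> (matrix_inv K *v x)) / 2)"

definition Ck_on :: "nat \<Rightarrow> real set \<Rightarrow> (real \<Rightarrow> real) \<Rightarrow> bool" where
  "Ck_on k S f \<longleftrightarrow> (\<forall>j<k. \<forall>x\<in>S. ((deriv ^^ j) f) differentiable (at x))
                    \<and> continuous_on S ((deriv ^^ k) f)"

definition admissible :: "(real \<Rightarrow> real) \<Rightarrow> bool" where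
  "admissible \<psi> \<longleftrightarrow>
     (\<exists>s\<ge>0. \<psi> s \<noteq> 0) \<and> continuous_on {0..} \<psi> \<and> Ck_on 4 {0<..} \<psi>
   \<and> \<psi> 1 = 0 \<and> deriv \<psi> 1 = 0
   \<and> (\<forall>s>0. (deriv ^^ 2) \<psi> s \<ge> 0)
   \<and> (\<forall>s>0. ((deriv ^^ 3) \<psi> s)\<^sup>2 \<le> 1/2 * (deriv ^^ 2) \<psi> s * (deriv ^^ 4) \<psi> s)"

definition partial :: "(real^'n \<Rightarrow> real) \<Rightarrow> 'n \<Rightarrow> real^'n \<Rightarrow> real" where
  "partial f i x = frechet_derivative f (at x) (axis i 1)"

fun Ck_fun :: "nat \<Rightarrow> (real^'n \<Rightarrow> real) \<Rightarrow> bool" where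
  "Ck_fun 0 f = continuous_on UNIV f"
| "Ck_fun (Suc n) f = ((\<forall>x. f differentiable (at x)) \<and> (\<forall>i. Ck_fun n (partial f i)))"

definition test_fun :: "(real^'n \<Rightarrow> real) \<Rightarrow> bool" where
  "test_fun \<phi> \<longleftrightarrow> (\<forall>n. Ck_fun n \<phi>) \<and> compact (closure {x. \<phi> x \<noteq> 0})"

definition weak_gradient :: "(real^'n \<Rightarrow> real) \<Rightarrow> (real^'n \<Rightarrow> real^'n) \<Rightarrow> bool" where
  "weak_gradient w g \<longleftrightarrow>
     (\<forall>S. compact S \<longrightarrow> set_integrable lborel S w \<and> (\<forall>i. set_integrable lborel S (\<lambda>x. g x $ i)))
   \<and> (\<forall>\<phi> i. test_fun \<phi> \<longrightarrow>
        (\<integral>x. w x * partial \<phi> i x \<partial>lborel) = - (\<integral>x. g x $ i * \<phi> x \<partial>lborel))"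

definition wfun :: "(real \<Rightarrow> real) \<Rightarrow> real^'n^'n \<Rightarrow> (real^'n \<Rightarrow> real) \<Rightarrow> real^'n \<Rightarrow> real" where
  "wfun \<psi> K f0 x = (LBINT s=1..(f0 x / finf K x). sqrt ((deriv ^^ 2) \<psi> s))"

definition initial_datum :: "(real \<Rightarrow> real) \<Rightarrow> (real^'n \<Rightarrow> real) \<Rightarrow> bool" where
  "initial_datum \<psi> f0 \<longleftrightarrow> integrable lborel f0 \<and> (\<integral>x. f0 x \<partial>lborel) = 1
     \<and> ((AE x in lborel. f0 x \<ge> 0) \<or> (\<forall>s. \<psi> s = (s - 1)\<^sup>2))"

text \<open>S_psi(f0), computed with a weak gradient g of w that lies in L^2(f_inf)\<close>
definition S_psi :: "real^'n^'n \<Rightarrow> real^'n^'n \<Rightarrow> (real^'n \<Rightarrow> real^'n) \<Rightarrow> ennreal" where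
  "S_psi K P g = (\<integral>\<^sup>+x. ennreal (g x \<bullet> (P *v g x) * finf K x) \<partial>lborel)"

definition psi_compatible_grad :: "(real \<Rightarrow> real) \<Rightarrow> real^'n^'n \<Rightarrow> (real^'n \<Rightarrow> real) \<Rightarrow> (real^'n \<Rightarrow> real^'n) \<Rightarrow> bool" where
  "psi_compatible_grad \<psi> K f0 g \<longleftrightarrow> weak_gradient (wfun \<psi> K f0) g
     \<and> (\<lambda>x. g x) \<in> borel_measurable lborel
     \<and> (\<integral>\<^sup>+x. ennreal ((norm (g x))\<^sup>2 * finf K x) \<partial>lborel) < \<infinity>"

end

theory Submission
  imports Defs "Jordan_Normal_Form.Jordan_Normal_Form_Existence"
begin

text \<open>
  Write \<open>C = P J Q\<close> with \<open>J\<close> in Jordan form. Conjugating \<open>J\<close> by \<open>diag(\<delta>\<^sup>i)\<close> replaces its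
  superdiagonal ones by \<open>\<delta>\<close>, so for \<open>M = diag(\<delta>\<^sup>-\<^sup>i) Q\<close> the positive definite weight
  \<open>R = Re (M\<^sup>* M)\<close> satisfies \<open>y \<bullet> R C y \<ge> c (y \<bullet> R y)\<close> as soon as all eigenvalues of \<open>C\<close>
  have real part \<open>\<ge> c\<close> and those sitting in a Jordan block of size \<open>> 1\<close> have real part
  \<open>\<ge> c + \<delta>\<close>. Such eigenvalues are defective, hence \<open>c = \<mu>\<close> is admissible in the non-defective
  case and \<open>c = \<mu> - \<epsilon>\<close> always is. As \<open>Q = K C\<^sup>T K\<^sup>-\<^sup>1\<close>, the matrix \<open>P = K R K\<close> satisfies
  \<open>Q P + P Q\<^sup>T = K (C\<^sup>T R + R C) K \<ge> 2 c P\<close>. Finally \<open>S\<^sub>\<psi>(f\<^sub>0)\<close> is finite because the quadratic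
  form of \<open>P\<close> is bounded by a multiple of \<open>|\<nabla>w|\<^sup>2\<close>, which is integrable against \<open>f\<^sub>\<infinity>\<close>.
\<close>

no_notation Matrix.vec_index (infixl "$" 100)
no_notation Matrix.scalar_prod (infix "\<bullet>" 70)
hide_const (open) Matrix.mat Determinant.det
hide_fact (open) Matrix.vec_eq_iff Matrix.mat_def Matrix.transpose_transpose

definition ord_rank :: "'n::{finite,wellorder} \<Rightarrow> nat" where
  "ord_rank a = card {l. l < a}"

definition ord_unrank :: "nat \<Rightarrow> 'n::{finite,wellorder}" where
  "ord_unrank = inv_into UNIV ord_rank"

lemma ord_rank_strict_mono: "strict_mono (ord_rank :: 'n::{finite,wellorder} \<Rightarrow> nat)"
  unfolding strict_mono_def ord_rank_def by (intro allI impI psubset_card_mono) auto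

lemma ord_rank_less_card: "ord_rank (a::'n::{finite,wellorder}) < CARD('n)"
  unfolding ord_rank_def by (rule psubset_card_mono) auto

lemma ord_rank_eq_iff [simp]: "ord_rank (a::'n::{finite,wellorder}) = ord_rank b \<longleftrightarrow> a = b"
  using strict_mono_eq[OF ord_rank_strict_mono] .

lemma bij_betw_ord_rank: "bij_betw (ord_rank :: 'n::{finite,wellorder} \<Rightarrow> nat) UNIV {..<CARD('n)}"
proof -
  have "inj (ord_rank :: 'n \<Rightarrow> nat)" by (simp add: inj_on_def)
  moreover have "ord_rank ` (UNIV::'n set) = {..<CARD('n)}"
    using ord_rank_less_card card_image[OF \<open>inj ord_rank\<close>]
    by (intro card_subset_eq) auto
  ultimately show ?thesis by (simp add: bij_betw_def)
qed

lemma ord_unrank_rank [simp]: "ord_unrank (ord_rank a) = a"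
  unfolding ord_unrank_def by (simp add: inv_into_f_f inj_on_def)

lemma ord_rank_unrank [simp]: "i < CARD('n::{finite,wellorder}) \<Longrightarrow> ord_rank (ord_unrank i :: 'n) = i"
  unfolding ord_unrank_def by (rule bij_betw_inv_into_right[OF bij_betw_ord_rank]) simp

lemma sum_ord_rank: "(\<Sum>a\<in>(UNIV::'n::{finite,wellorder} set). f (ord_rank a)) = (\<Sum>i<CARD('n). f i)"
  using sum.reindex_bij_betw[OF bij_betw_ord_rank] .

lemma sum_ord_unrank: "(\<Sum>a\<in>(UNIV::'n::{finite,wellorder} set). g a) = (\<Sum>i<CARD('n). g (ord_unrank i))"
  using sum_ord_rank[where 'n='n and f = "\<lambda>i. g (ord_unrank i)"] by simp

section \<open>Jordan normal form over a well-ordered index type\<close>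

lemma jordan_matrix_Cons_index:
  fixes n_as :: "(nat \<times> 'a::zero_neq_one) list"
  assumes "i < m + sum_list (map fst n_as)" "j < m + sum_list (map fst n_as)"
  shows "jordan_matrix ((m, a) # n_as) $$ (i, j) =
    (if i < m then if j < m then (if i = j then a else if Suc i = j then 1 else 0) else 0
     else if j < m then 0 else jordan_matrix n_as $$ (i - m, j - m))"
  unfolding jordan_matrix_Cons using assms by (subst index_mat_four_block) auto

lemma jordan_matrix_bidiagonal:
  fixes n_as :: "(nat \<times> 'a::zero_neq_one) list"
  assumes "i < sum_list (map fst n_as)" "j < sum_list (map fst n_as)"
    and "jordan_matrix n_as $$ (i, j) \<noteq> 0"
  shows "j = i \<or> j = Suc i"
  using assms
proof (induction n_as arbitrary: i j)
  case (Cons x n_as)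
  obtain m a where x: "x = (m, a)" by force
  show ?case
  proof (cases "i < m \<or> j < m")
    case True
    then show ?thesis using Cons.prems jordan_matrix_Cons_index[of i m n_as j a]
      by (auto simp: x split: if_splits)
  next
    case False
    then have "j - m = i - m \<or> j - m = Suc (i - m)"
      using Cons.prems Cons.IH[of "i - m" "j - m"] jordan_matrix_Cons_index[of i m n_as j a]
      by (auto simp: x)
    then show ?thesis using False by arith
  qed
qed simp

lemma jordan_matrix_superdiagonal:
  fixes n_as :: "(nat \<times> 'a::zero_neq_one) list"
  assumes "Suc i < sum_list (map fst n_as)"
  shows "jordan_matrix n_as $$ (i, Suc i) = 0 \<or> jordan_matrix n_as $$ (i, Suc i) = 1"
  using assms
proof (induction n_as arbitrary: i)
  case (Cons x n_as)
  obtain m a where x: "x = (m, a)" by force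
  have "Suc i - m = Suc (i - m)" if "\<not> i < m" using that by simp
  then show ?case using Cons.prems Cons.IH[of "i - m"] jordan_matrix_Cons_index[of i m n_as "Suc i" a]
    by (auto simp: x split: if_splits)
qed simp

lemma jordan_matrix_superdiagonal_one:
  fixes n_as :: "(nat \<times> 'a::zero_neq_one) list"
  assumes "Suc i < sum_list (map fst n_as)" and "jordan_matrix n_as $$ (i, Suc i) = 1"
  shows "jordan_matrix n_as $$ (i, i) = jordan_matrix n_as $$ (Suc i, Suc i)"
  using assms
proof (induction n_as arbitrary: i)
  case (Cons x n_as)
  obtain m a where x: "x = (m, a)" by force
  have "Suc i - m = Suc (i - m)" if "\<not> i < m" using that by simp
  then show ?case using Cons.prems Cons.IH[of "i - m"] jordan_matrix_Cons_index[of i m n_as "Suc i" a]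
      jordan_matrix_Cons_index[of i m n_as i a] jordan_matrix_Cons_index[of "Suc i" m n_as "Suc i" a]
    by (auto simp: x split: if_splits)
qed simp

definition cart_of_mat :: "'a mat \<Rightarrow> 'a^('n::{finite,wellorder})^('n::{finite,wellorder})" where
  "cart_of_mat A = (\<chi> a b. A $$ (ord_rank a, ord_rank b))"

lemma cart_of_mat_mult:
  fixes A B :: "'a::comm_semiring_1 mat"
  assumes "A \<in> carrier_mat CARD('n) CARD('n)" "B \<in> carrier_mat CARD('n) CARD('n)"
  shows "(cart_of_mat (A * B) :: 'a^('n::{finite,wellorder})^('n::{finite,wellorder}))
    = cart_of_mat A ** cart_of_mat B"
proof -
  have "(A * B) $$ (ord_rank a, ord_rank b) =
      (\<Sum>c\<in>(UNIV::'n set). A $$ (ord_rank a, ord_rank c) * B $$ (ord_rank c, ord_rank b))" for a b :: 'n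
    using assms ord_rank_less_card[of a] ord_rank_less_card[of b]
      sum_ord_rank[where 'n='n and f = "\<lambda>i. A $$ (ord_rank a, i) * B $$ (i, ord_rank b)"]
    by (simp add: scalar_prod_def atLeast0LessThan)
  then show ?thesis by (simp add: cart_of_mat_def matrix_matrix_mult_def vec_eq_iff)
qed

lemma cart_of_mat_one:
  "(cart_of_mat (1\<^sub>m CARD('n)) :: 'a::semiring_1^('n::{finite,wellorder})^('n::{finite,wellorder})) = mat 1"
  using ord_rank_less_card[where 'n='n] by (simp add: cart_of_mat_def mat_def vec_eq_iff)

text \<open>\<open>lam i\<close> is the \<open>i\<close>-th diagonal entry in the order of \<open>ord_rank\<close>, and \<open>linked i\<close>
  says that the entry \<open>(i, i + 1)\<close> is \<open>1\<close>, i.e. that \<open>i\<close> and \<open>i + 1\<close> lie in the same Jordan block.\<close>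
locale jordan_shape =
  fixes J :: "complex^('n::{finite,wellorder})^('n::{finite,wellorder})"
    and lam :: "nat \<Rightarrow> complex" and linked :: "nat \<Rightarrow> bool"
  assumes jordan_nth: "J $ a $ b = (if a = b then lam (ord_rank a)
      else if ord_rank b = Suc (ord_rank a) \<and> linked (ord_rank a) then 1 else 0)"
    and linked_imp: "linked i \<Longrightarrow> Suc i < CARD('n) \<and> lam (Suc i) = lam i"

locale jordan_decomposition = jordan_shape J lam linked for J lam linked +
  fixes C :: "real^('n::{finite,wellorder})^('n::{finite,wellorder})"
    and P Q :: "complex^('n::{finite,wellorder})^('n::{finite,wellorder})"
  assumes right_inverse: "P ** Q = mat 1" and left_inverse: "Q ** P = mat 1"
    and cmat_eq: "cmat C = P ** J ** Q"

lemma jordan_shape_jordan_matrix: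
  fixes n_as :: "(nat \<times> complex) list"
  assumes N: "sum_list (map fst n_as) = CARD('n)"
  shows "jordan_shape
    (cart_of_mat (jordan_matrix n_as) :: complex^('n::{finite,wellorder})^('n::{finite,wellorder}))
    (\<lambda>i. jordan_matrix n_as $$ (i, i)) (\<lambda>i. Suc i < CARD('n) \<and> jordan_matrix n_as $$ (i, Suc i) = 1)"
proof
  fix a b :: 'n
  let ?i = "ord_rank a" and ?j = "ord_rank b" and ?J = "jordan_matrix n_as"
  have "?J $$ (?i, ?j) = 0" if "a \<noteq> b" "\<not> (?j = Suc ?i \<and> Suc ?i < CARD('n) \<and> ?J $$ (?i, Suc ?i) = 1)"
    using that jordan_matrix_bidiagonal[of ?i n_as ?j] jordan_matrix_superdiagonal[of ?i n_as]
      ord_rank_less_card[of a] ord_rank_less_card[of b] N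
    by (metis ord_rank_eq_iff)
  then show "cart_of_mat ?J $ a $ b = (if a = b then ?J $$ (?i, ?i)
      else if ?j = Suc ?i \<and> Suc ?i < CARD('n) \<and> ?J $$ (?i, Suc ?i) = 1 then 1 else 0)"
    by (auto simp: cart_of_mat_def)
next
  fix i assume "Suc i < CARD('n) \<and> jordan_matrix n_as $$ (i, Suc i) = 1"
  then show "Suc i < CARD('n) \<and> jordan_matrix n_as $$ (Suc i, Suc i) = jordan_matrix n_as $$ (i, i)"
    using jordan_matrix_superdiagonal_one[of i n_as] N by simp
qed

lemma jordan_decomposition_exists:
  fixes C :: "real^('n::{finite,wellorder})^('n::{finite,wellorder})"
  obtains J lam linked P Q where "jordan_decomposition J lam linked C P Q"
proof -
  let ?n = "CARD('n)"
  define A where "A = Matrix.mat ?n ?n (\<lambda>(i, j). cmat C $ ord_unrank i $ ord_unrank j)"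
  have A: "A \<in> carrier_mat ?n ?n" by (simp add: A_def)
  obtain as where "char_poly A = (\<Prod>a\<leftarrow>as. [:- a, 1:])"
    using char_poly_factorized[OF A] by blast
  then obtain n_as where "jordan_nf A n_as" using jordan_nf_exists[OF A] by blast
  then obtain n P Q where PQ: "{A, jordan_matrix n_as, P, Q} \<subseteq> carrier_mat n n"
      "P * Q = 1\<^sub>m n" "Q * P = 1\<^sub>m n" "A = P * jordan_matrix n_as * Q"
    unfolding jordan_nf_def using similar_matD by blast
  have n: "n = ?n" using PQ(1) A by auto
  then have N: "sum_list (map fst n_as) = ?n"
    using PQ(1) by (metis carrier_matD(1) insert_subset jordan_matrix_dim(1))
  have carrier: "P \<in> carrier_mat ?n ?n" "Q \<in> carrier_mat ?n ?n" "jordan_matrix n_as \<in> carrier_mat ?n ?n"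
    using PQ(1) n by auto
  have "cmat C = cart_of_mat A"
    using ord_rank_less_card[where 'n='n] by (simp add: A_def cart_of_mat_def vec_eq_iff)
  then have "cmat C = cart_of_mat P
      ** (cart_of_mat (jordan_matrix n_as) :: complex^('n::{finite,wellorder})^('n::{finite,wellorder}))
      ** cart_of_mat Q"
    using PQ(4) carrier by (simp add: cart_of_mat_mult matrix_mul_assoc)
  moreover have
    "cart_of_mat P ** cart_of_mat Q = (mat 1 :: complex^('n::{finite,wellorder})^('n::{finite,wellorder}))"
    "cart_of_mat Q ** cart_of_mat P = (mat 1 :: complex^('n::{finite,wellorder})^('n::{finite,wellorder}))"
    using PQ(2,3) carrier by (simp_all add: n cart_of_mat_mult[symmetric] cart_of_mat_one)
  ultimately show ?thesis
    using jordan_shape_jordan_matrix[OF N] that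
    by (simp add: jordan_decomposition_def jordan_decomposition_axioms_def)
qed

context jordan_shape
begin

lemma linked_less_card: "linked i \<Longrightarrow> i < CARD('n)"
  using linked_imp by (simp add: Suc_lessD)

lemma mult_vec_nth:
  "(J *v w) $ a = lam (ord_rank a) * w $ a
     + (if linked (ord_rank a) then w $ ord_unrank (Suc (ord_rank a)) else 0)"
proof -
  let ?next = "ord_unrank (Suc (ord_rank a)) :: 'n"
  have next_iff: "ord_rank b = Suc (ord_rank a) \<longleftrightarrow> b = ?next" if "linked (ord_rank a)" for b
    using linked_imp[OF that] by (metis ord_rank_unrank ord_unrank_rank)
  have "J $ a $ b * w $ b = (if b = a then lam (ord_rank a) * w $ a else 0)
      + (if linked (ord_rank a) \<and> b = ?next then w $ ?next else 0)" for b
    using next_iff[of b] next_iff[of a] by (auto simp: jordan_nth)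
  then show ?thesis
    by (simp add: matrix_vector_mult_def sum.distrib if_distrib[of "\<lambda>x. x * _"] cong: if_cong)
qed

lemma eigvec_nth_eq_0:
  assumes eig: "J *v w = \<mu> *s w" and "lam (ord_rank a) \<noteq> \<mu>"
  shows "w $ a = 0"
  using assms(2)
proof (induction "CARD('n) - ord_rank a" arbitrary: a rule: less_induct)
  case less
  let ?next = "ord_unrank (Suc (ord_rank a)) :: 'n"
  have eq: "lam (ord_rank a) * w $ a + (if linked (ord_rank a) then w $ ?next else 0) = \<mu> * w $ a"
    using mult_vec_nth[of w a] by (simp add: eig)
  show ?case
  proof (cases "linked (ord_rank a)")
    case True
    then have "ord_rank ?next = Suc (ord_rank a)" "lam (Suc (ord_rank a)) = lam (ord_rank a)"
      using linked_imp by auto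
    moreover have "CARD('n) - Suc (ord_rank a) < CARD('n) - ord_rank a"
      using linked_imp[OF True] by linarith
    ultimately have "w $ ?next = 0"
      using less.hyps[of ?next] less.prems by simp
    then show ?thesis using eq less.prems True by simp
  qed (use eq less.prems in simp)
qed

lemma eigvec_nth_eq_0_after_link:
  assumes eig: "J *v w = \<mu> *s w" and "linked j" and a: "ord_rank a = Suc j"
  shows "w $ a = 0"
proof (cases "lam j = \<mu>")
  case True
  let ?b = "ord_unrank j :: 'n"
  have b: "ord_rank ?b = j"
    using linked_imp[OF \<open>linked j\<close>] by simp
  then have "ord_unrank (Suc (ord_rank ?b)) = a"
    by (metis a ord_unrank_rank)
  show ?thesis
    using mult_vec_nth[of w ?b] \<open>linked j\<close> True b \<open>ord_unrank _ = a\<close> by (simp add: eig)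
next
  case False
  then show ?thesis using eigvec_nth_eq_0[OF eig] a linked_imp[OF \<open>linked j\<close>] by simp
qed

text \<open>First indices of the Jordan blocks for \<open>\<mu>\<close>; each block contributes one eigenvector.\<close>
definition block_starts :: "complex \<Rightarrow> 'n set" where
  "block_starts \<mu> = {a. lam (ord_rank a) = \<mu> \<and> \<not> (\<exists>j. linked j \<and> ord_rank a = Suc j)}"

lemma eigvec_in_span_block_starts:
  assumes eig: "J *v w = \<mu> *s w"
  shows "w \<in> vec.span ((\<lambda>a. axis a 1) ` block_starts \<mu>)"
proof -
  have "w $ a *s axis a 1 \<in> vec.span ((\<lambda>a. axis a 1) ` block_starts \<mu>)" for a
  proof (cases "a \<in> block_starts \<mu>")
    case False
    then have "w $ a = 0"
      using eigvec_nth_eq_0[OF eig] eigvec_nth_eq_0_after_link[OF eig] by (auto simp: block_starts_def)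
    then show ?thesis by (simp add: vec.span_zero)
  qed (intro vec.span_scale vec.span_base imageI)
  then have "(\<Sum>a\<in>UNIV. w $ a *s axis a 1) \<in> vec.span ((\<lambda>a. axis a 1) ` block_starts \<mu>)"
    by (intro vec.span_sum)
  then show ?thesis by (simp add: basis_expansion)
qed

lemma block_starts_nonempty: "block_starts (lam (ord_rank (a::'n))) \<noteq> {}"
proof (induction "ord_rank a" arbitrary: a rule: less_induct)
  case less
  show ?case
  proof (cases "\<exists>j. linked j \<and> ord_rank a = Suc j")
    case True
    then obtain j where j: "linked j" "ord_rank a = Suc j" by blast
    then have rank_j: "ord_rank (ord_unrank j :: 'n) = j" and "lam j = lam (ord_rank a)"
      using linked_imp[OF j(1)] by auto
    moreover have "ord_rank (ord_unrank j :: 'n) < ord_rank a"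
      using rank_j j(2) by simp
    then have "block_starts (lam (ord_rank (ord_unrank j :: 'n))) \<noteq> {}"
      by (rule less.hyps)
    ultimately show ?thesis by simp
  next
    case False
    then have "a \<in> block_starts (lam (ord_rank a))" by (simp add: block_starts_def)
    then show ?thesis by blast
  qed
qed

lemma block_start_eigvec:
  assumes "s \<in> block_starts \<mu>"
  shows "J *v axis s 1 = \<mu> *s axis s 1"
proof -
  have "ord_unrank (Suc (ord_rank a)) \<noteq> s" if "linked (ord_rank a)" for a
  proof
    assume "ord_unrank (Suc (ord_rank a)) = s"
    then have "ord_rank s = Suc (ord_rank a)" using linked_imp[OF that] by auto
    then show False using assms that by (auto simp: block_starts_def)
  qed
  then have "(J *v axis s 1) $ b = (\<mu> *s axis s 1) $ b" for b
    using assms by (auto simp: mult_vec_nth axis_def block_starts_def)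
  then show ?thesis by (simp add: vec_eq_iff)
qed

end

section \<open>Eigenvalues and their multiplicities\<close>

lemma matrix_diff_ldistrib: "(A::'a::ring_1^'n^'m) ** (B - C) = A ** B - A ** C"
  by (simp add: matrix_matrix_mult_def vec_eq_iff algebra_simps sum_subtractf)

lemma matrix_diff_rdistrib: "((B::'a::ring_1^'n^'m) - C) ** A = B ** A - C ** A"
  by (simp add: matrix_matrix_mult_def vec_eq_iff algebra_simps sum_subtractf)

lemma mat_matrix_mult_commute: "(mat k :: 'a::comm_ring_1^'n^'n) ** A = A ** mat k"
  by (simp add: matrix_matrix_mult_def vec_eq_iff mat_def
      if_distrib[of "\<lambda>x. x * _"] if_distrib[of "\<lambda>x. _ * x"] mult.commute cong: if_cong)

definition const_poly_mat :: "'a::comm_semiring_1^'n^'m \<Rightarrow> 'a poly^'n^'m" where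
  "const_poly_mat M = (\<chi> i j. [:M $ i $ j:])"

lemma const_poly_mat_mult: "const_poly_mat (A ** B) = const_poly_mat A ** const_poly_mat B"
  by (simp add: const_poly_mat_def matrix_matrix_mult_def vec_eq_iff
      mult_to_poly sum_to_poly mult.commute)

lemma const_poly_mat_one: "const_poly_mat (mat 1) = mat 1"
  by (simp add: const_poly_mat_def vec_eq_iff mat_def)

lemma order_prod_linear_factors:
  assumes "finite A"
  shows "order x (\<Prod>i\<in>A. [:- f i, 1:]) = card {i\<in>A. f i = (x::'a::idom)}"
  using assms
proof (induction A rule: finite_induct)
  case (insert a A)
  have "(\<Prod>i\<in>A. [:- f i, 1:]) \<noteq> 0" using insert.hyps(1) by simp
  then have "[:- f a, 1:] * (\<Prod>i\<in>A. [:- f i, 1:]) \<noteq> 0" by (simp only: mult_eq_0_iff) simp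
  then have "order x (\<Prod>i\<in>insert a A. [:- f i, 1:])
      = order x [:- f a, 1:] + order x (\<Prod>i\<in>A. [:- f i, 1:])"
    unfolding prod.insert[OF insert.hyps(1,2)] by (rule order_mult)
  moreover have "{i \<in> insert a A. f i = x}
      = (if f a = x then insert a {i \<in> A. f i = x} else {i \<in> A. f i = x})"
    by auto
  ultimately show ?case using insert by (simp add: order_linear')
qed simp

context jordan_decomposition
begin

lemma mult_vec_eq_0_iff [simp]: "P *v v = 0 \<longleftrightarrow> v = 0" "Q *v v = 0 \<longleftrightarrow> v = 0"
proof -
  have "Q *v (P *v v) = v" "P *v (Q *v v) = v"
    by (simp_all add: matrix_vector_mul_assoc left_inverse right_inverse)
  then show "P *v v = 0 \<longleftrightarrow> v = 0" "Q *v v = 0 \<longleftrightarrow> v = 0"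
    by (metis matrix_vector_mult_0_right)+
qed

lemma eigvec_to_jordan:
  assumes "cmat C *v v = \<mu> *s v"
  shows "J *v (Q *v v) = \<mu> *s (Q *v v)"
proof -
  have "J ** Q = Q ** cmat C" by (simp add: cmat_eq matrix_mul_assoc left_inverse)
  then show ?thesis
    using assms by (metis matrix_vector_mul_assoc vector_scalar_commute)
qed

lemma cspec_eq: "cspec C = range (\<lambda>a::'n. lam (ord_rank a))"
proof (intro equalityI subsetI)
  fix \<mu> assume "\<mu> \<in> cspec C"
  then obtain v where "v \<noteq> 0" "cmat C *v v = \<mu> *s v" by (auto simp: cspec_def c_eigenvalue_def)
  then have "Q *v v \<in> vec.span ((\<lambda>a. axis a 1) ` block_starts \<mu>)" "Q *v v \<noteq> 0"
    using eigvec_in_span_block_starts eigvec_to_jordan by auto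
  then have "block_starts \<mu> \<noteq> {}" by auto
  then show "\<mu> \<in> range (\<lambda>a::'n. lam (ord_rank a))" by (auto simp: block_starts_def)
next
  fix \<mu> assume "\<mu> \<in> range (\<lambda>a::'n. lam (ord_rank a))"
  then obtain s where "s \<in> block_starts \<mu>" using block_starts_nonempty by blast
  moreover have "cmat C ** P = P ** J"
    by (simp add: cmat_eq matrix_mul_assoc[symmetric] left_inverse)
  ultimately have "cmat C *v (P *v axis s 1) = \<mu> *s (P *v axis s 1)"
    by (metis block_start_eigvec matrix_vector_mul_assoc vector_scalar_commute)
  moreover have "P *v axis s 1 \<noteq> 0" by (simp add: axis_eq_0_iff)
  ultimately show "\<mu> \<in> cspec C" unfolding cspec_def c_eigenvalue_def by blast
qed

lemma charpoly_eq: "charpoly C = (\<Prod>a\<in>(UNIV::'n set). [:- lam (ord_rank a), 1:])"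
proof -
  let ?X = "mat [:0, 1:] :: complex poly^('n::{finite,wellorder})^('n::{finite,wellorder})"
    and ?lift = const_poly_mat
  have "charpoly C = det (?X - ?lift (cmat C))"
    unfolding charpoly_def const_poly_mat_def cmat_def
    by (rule arg_cong[where f = det])
      (simp add: vec_eq_iff mat_def)
  also have "?X - ?lift (cmat C) = ?lift P ** (?X - ?lift J) ** ?lift Q"
  proof -
    have "?lift P ** ?X ** ?lift Q = ?lift P ** ?lift Q ** ?X"
      by (simp add: matrix_mul_assoc[symmetric] mat_matrix_mult_commute)
    also have "\<dots> = ?X"
      by (simp add: const_poly_mat_mult[symmetric] right_inverse const_poly_mat_one)
    finally have "?lift P ** ?X ** ?lift Q = ?X" .
    then show ?thesis
      by (simp add: cmat_eq matrix_diff_ldistrib matrix_diff_rdistrib const_poly_mat_mult)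
  qed
  also have "det \<dots> = det (?lift (P ** Q)) * det (?X - ?lift J)"
    by (simp add: det_mul const_poly_mat_mult)
  also have "det (?X - ?lift J) = (\<Prod>a\<in>UNIV. (?X - ?lift J) $ a $ a)"
  proof (rule det_upperdiagonal)
    fix a b :: 'n assume "b < a"
    then show "(?X - ?lift J) $ a $ b = 0"
      using strict_monoD[OF ord_rank_strict_mono \<open>b < a\<close>]
      by (simp add: jordan_nth const_poly_mat_def mat_def)
  qed
  also have "\<dots> = (\<Prod>a\<in>(UNIV::'n set). [:- lam (ord_rank a), 1:])"
    by (simp add: jordan_nth const_poly_mat_def mat_def)
  finally show ?thesis by (simp add: right_inverse const_poly_mat_one)
qed

lemma alg_mult_eq: "alg_mult C \<mu> = card {a::'n. lam (ord_rank a) = \<mu>}"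
  unfolding alg_mult_def charpoly_eq by (simp add: order_prod_linear_factors)

lemma geom_mult_le: "geom_mult C \<mu> \<le> card (block_starts \<mu>)"
proof -
  let ?B = "(\<lambda>a. axis a 1) ` block_starts \<mu> :: (complex^('n::{finite,wellorder})) set"
  have "{v. cmat C *v v = \<mu> *s v} \<subseteq> vec.span ((*v) P ` ?B)"
  proof
    fix v assume "v \<in> {v. cmat C *v v = \<mu> *s v}"
    then have "Q *v v \<in> vec.span ?B" by (simp add: eigvec_in_span_block_starts eigvec_to_jordan)
    then have "P *v (Q *v v) \<in> vec.span ((*v) P ` ?B)" by (simp add: vec.span_image)
    then show "v \<in> vec.span ((*v) P ` ?B)" by (simp add: matrix_vector_mul_assoc right_inverse)
  qed
  then have "geom_mult C \<mu> \<le> card ((*v) P ` ?B)"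
    unfolding geom_mult_def by (rule vec.dim_le_card) simp
  also have "\<dots> \<le> card (block_starts \<mu>)"
    by (rule le_trans[OF card_image_le card_image_le]) simp_all
  finally show ?thesis .
qed

lemma defective_if_linked:
  assumes "linked j"
  shows "defective C (lam j)"
proof -
  let ?next = "ord_unrank (Suc j) :: 'n"
  have "ord_rank ?next = Suc j" "lam (Suc j) = lam j" using linked_imp[OF assms] by auto
  then have "?next \<in> {a::'n. lam (ord_rank a) = lam j} - block_starts (lam j)"
    using assms by (auto simp: block_starts_def)
  moreover have "block_starts (lam j) \<subseteq> {a::'n. lam (ord_rank a) = lam j}"
    by (auto simp: block_starts_def)
  ultimately have "card (block_starts (lam j)) < card {a::'n. lam (ord_rank a) = lam j}"
    by (intro psubset_card_mono) auto
  then show ?thesis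
    unfolding defective_def alg_mult_eq using geom_mult_le[of "lam j"] by linarith
qed

lemma lam_in_cspec: "i < CARD('n) \<Longrightarrow> lam i \<in> cspec C"
  unfolding cspec_eq by (metis ord_rank_unrank rangeI)

lemma mu_le_Re: "i < CARD('n) \<Longrightarrow> mu C \<le> Re (lam i)"
  using lam_in_cspec unfolding mu_def cspec_eq by (intro Min_le) auto

end

section \<open>A weighted inner product adapted to \<open>C\<close>\<close>

definition of_real_vec :: "real^'n \<Rightarrow> complex^'n" where
  "of_real_vec y = (\<chi> i. complex_of_real (y $ i))"

lemma of_real_vec_mult: "of_real_vec (C *v y) = cmat C *v of_real_vec y"
  by (simp add: of_real_vec_def cmat_def matrix_vector_mult_def vec_eq_iff)

lemma of_real_vec_eq_0_iff [simp]: "of_real_vec y = 0 \<longleftrightarrow> y = 0"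
  by (simp add: of_real_vec_def vec_eq_iff)

definition diag_matrix :: "('n \<Rightarrow> 'a::zero) \<Rightarrow> 'a^'n^'n" where
  "diag_matrix f = (\<chi> a b. if a = b then f a else 0)"

lemma diag_matrix_mult_vec_nth: "(diag_matrix f *v x) $ a = f a * x $ a"
  by (simp add: diag_matrix_def matrix_vector_mult_def if_distrib[of "\<lambda>x. x * _"] cong: if_cong)

lemma diag_matrix_mult: "diag_matrix f ** diag_matrix g = diag_matrix (\<lambda>a. f a * (g a :: 'a::semiring_1))"
  by (simp add: diag_matrix_def matrix_matrix_mult_def vec_eq_iff
      if_distrib[of "\<lambda>x. x * _"] cong: if_cong)

lemma diag_matrix_one: "diag_matrix (\<lambda>a. 1) = mat 1"
  by (simp add: diag_matrix_def mat_def)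

definition gram_form :: "complex^'n^'m \<Rightarrow> real^'n^'n" where
  "gram_form M = (\<chi> a b. Re (\<Sum>k\<in>UNIV. cnj (M $ k $ a) * M $ k $ b))"

lemma inner_gram_form:
  "y \<bullet> (gram_form M *v w) = Re (\<Sum>k\<in>UNIV. cnj ((M *v of_real_vec y) $ k) * (M *v of_real_vec w) $ k)"
proof -
  have "y \<bullet> (gram_form M *v w) = (\<Sum>a\<in>UNIV. \<Sum>b\<in>UNIV. \<Sum>k\<in>UNIV.
      Re (cnj (M $ k $ a * of_real (y $ a)) * (M $ k $ b * of_real (w $ b))))"
    by (simp add: inner_vec_def gram_form_def matrix_vector_mult_def sum_distrib_left sum_distrib_right
        Re_sum mult_ac distrib_left sum.distrib)
  also have "\<dots> = (\<Sum>k\<in>UNIV. \<Sum>a\<in>UNIV. \<Sum>b\<in>UNIV.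
      Re (cnj (M $ k $ a * of_real (y $ a)) * (M $ k $ b * of_real (w $ b))))"
    by (subst sum.swap) (subst (2) sum.swap, rule refl)
  also have "\<dots> = Re (\<Sum>k\<in>UNIV. cnj ((M *v of_real_vec y) $ k) * (M *v of_real_vec w) $ k)"
    unfolding matrix_vector_mult_def of_real_vec_def
    apply (simp add: Re_sum cnj_sum sum_distrib_left sum_distrib_right)
    apply (rule arg_cong2[where f="(+)"]; rule sum.cong[OF refl]; rule sum.swap)
    done
  finally show ?thesis .
qed

lemma gram_form_quadratic: "y \<bullet> (gram_form M *v y) = (\<Sum>k\<in>UNIV. (cmod ((M *v of_real_vec y) $ k))\<^sup>2)"
  unfolding inner_gram_form Re_sum by (simp add: complex_mult_cnj cmod_def power2_eq_square)

lemma pos_def_gram_form: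
  fixes M :: "complex^'n^'m"
  assumes "\<And>x. M *v of_real_vec x = 0 \<Longrightarrow> x = 0"
  shows "pos_def (gram_form M)"
  unfolding pos_def_def sym_mat_def
proof
  show "transpose (gram_form M) = gram_form M"
    by (simp add: gram_form_def transpose_def vec_eq_iff mult.commute)
  show "\<forall>x. x \<noteq> 0 \<longrightarrow> 0 < x \<bullet> (gram_form M *v x)"
  proof (intro allI impI)
    fix x :: "real^'n" assume "x \<noteq> 0"
    then have "M *v of_real_vec x \<noteq> 0" using assms by blast
    then obtain k where "(M *v of_real_vec x) $ k \<noteq> 0"
      by (auto simp: vec_eq_iff)
    then show "0 < x \<bullet> (gram_form M *v x)"
      unfolding gram_form_quadratic by (intro sum_pos2[of UNIV k]) auto
  qed
qed

lemma Re_cnj_mult_ge: "- ((cmod a)\<^sup>2 + (cmod b)\<^sup>2) / 2 \<le> Re (cnj a * b)"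
proof -
  have "\<bar>Re (cnj a * b)\<bar> \<le> cmod a * cmod b"
    using abs_Re_le_cmod[of "cnj a * b"] by (simp add: norm_mult)
  also have "\<dots> \<le> ((cmod a)\<^sup>2 + (cmod b)\<^sup>2) / 2"
    using sum_squares_bound[of "cmod a" "cmod b"] by (simp add: power2_eq_square)
  finally show ?thesis by linarith
qed

lemma sum_shift_linked:
  fixes q :: "nat \<Rightarrow> real"
  assumes "\<And>i. linked i \<Longrightarrow> Suc i < n"
  shows "(\<Sum>i<n. if linked i then q (Suc i) else 0) = (\<Sum>i<n. if 0 < i \<and> linked (i - 1) then q i else 0)"
proof -
  let ?g = "\<lambda>i. if 0 < i \<and> linked (i - 1) then q i else 0"
  have "(\<Sum>i<Suc n. ?g i) = (\<Sum>i<n. if linked i then q (Suc i) else 0)"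
    by (subst sum.lessThan_Suc_shift) simp
  moreover have "?g n = 0" using assms[of "n - 1"] by auto
  ultimately show ?thesis by simp
qed

text \<open>Each link costs at most \<open>\<delta>/2 (|z\<^sub>i|\<^sup>2 + |z\<^sub>i\<^sub>+\<^sub>1|\<^sup>2)\<close>; coordinate \<open>i\<close> is charged only by
  the links at \<open>i\<close> and \<open>i - 1\<close>, and then \<open>Re (lam i) \<ge> c + \<delta>\<close>.\<close>
lemma bidiagonal_form_ge:
  fixes z lam :: "nat \<Rightarrow> complex" and \<delta> c :: real
  assumes "\<delta> \<ge> 0" and lam_ge: "\<And>i. i < n \<Longrightarrow> c \<le> Re (lam i)"
    and linked: "\<And>i. linked i \<Longrightarrow> Suc i < n \<and> c + \<delta> \<le> Re (lam i) \<and> c + \<delta> \<le> Re (lam (Suc i))"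
  shows "c * (\<Sum>i<n. (cmod (z i))\<^sup>2)
    \<le> Re (\<Sum>i<n. cnj (z i) * (lam i * z i + (if linked i then of_real \<delta> * z (Suc i) else 0)))"
proof -
  define q where "q i = (cmod (z i))\<^sup>2" for i
  define w where
    "w i = (if linked i then \<delta> / 2 else 0) + (if 0 < i \<and> linked (i - 1) then \<delta> / 2 else 0)" for i
  have term_ge: "Re (lam i) * q i - (if linked i then \<delta> / 2 * (q i + q (Suc i)) else 0)
      \<le> Re (cnj (z i) * (lam i * z i + (if linked i then of_real \<delta> * z (Suc i) else 0)))" for i
  proof -
    have "Re (cnj (z i) * (lam i * z i)) = Re (lam i) * q i"
      by (simp add: q_def mult.left_commute[of "cnj _"] complex_mult_cnj cmod_def power2_eq_square)
    then have split: "Re (cnj (z i) * (lam i * z i + (if linked i then of_real \<delta> * z (Suc i) else 0)))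
        = Re (lam i) * q i + (if linked i then \<delta> * Re (cnj (z i) * z (Suc i)) else 0)"
      by (simp add: distrib_left mult.left_commute)
    have "\<delta> * (- (q i + q (Suc i)) / 2) \<le> \<delta> * Re (cnj (z i) * z (Suc i))"
      unfolding q_def by (rule mult_left_mono[OF Re_cnj_mult_ge \<open>\<delta> \<ge> 0\<close>])
    then show ?thesis unfolding split by (auto simp: field_simps)
  qed
  have "(if linked i then \<delta> / 2 * (q i + q (Suc i)) else 0)
      = (if linked i then \<delta> / 2 else 0) * q i + \<delta> / 2 * (if linked i then q (Suc i) else 0)"
    and "w i * q i
      = (if linked i then \<delta> / 2 else 0) * q i + \<delta> / 2 * (if 0 < i \<and> linked (i - 1) then q i else 0)"
    for i by (simp_all add: w_def algebra_simps)
  then have "(\<Sum>i<n. if linked i then \<delta> / 2 * (q i + q (Suc i)) else 0) = (\<Sum>i<n. w i * q i)"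
    using sum_shift_linked[of linked n q] linked
    by (simp add: sum.distrib flip: sum_distrib_left sum_divide_distrib)
  moreover have "c * q i \<le> (Re (lam i) - w i) * q i" if "i < n" for i
  proof (rule mult_right_mono)
    show "c \<le> Re (lam i) - w i"
      using that lam_ge[OF that] linked[of i] linked[of "i - 1"] \<open>\<delta> \<ge> 0\<close>
      by (auto simp: w_def)
  qed (simp add: q_def)
  then have "c * (\<Sum>i<n. q i) \<le> (\<Sum>i<n. Re (lam i) * q i - w i * q i)"
    unfolding sum_distrib_left by (intro sum_mono) (simp add: left_diff_distrib)
  ultimately have "c * (\<Sum>i<n. q i)
      \<le> (\<Sum>i<n. Re (lam i) * q i - (if linked i then \<delta> / 2 * (q i + q (Suc i)) else 0))"
    by (simp add: sum_subtractf)
  also have "\<dots> \<le> Re (\<Sum>i<n. cnj (z i) * (lam i * z i + (if linked i then of_real \<delta> * z (Suc i) else 0)))"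
    unfolding Re_sum by (intro sum_mono term_ge)
  finally show ?thesis by (simp add: q_def)
qed

context jordan_decomposition
begin

lemma scaled_jordan_mult_nth:
  fixes \<delta> :: complex
  assumes "\<delta> \<noteq> 0"
  shows "((diag_matrix (\<lambda>a. inverse \<delta> ^ ord_rank a) ** J ** diag_matrix (\<lambda>a. \<delta> ^ ord_rank a)) *v z) $ a
    = lam (ord_rank a) * z $ a + (if linked (ord_rank a) then \<delta> * z $ ord_unrank (Suc (ord_rank a)) else 0)"
    (is "?lhs = ?rhs")
proof -
  let ?r = "ord_rank a"
  have "linked ?r \<Longrightarrow> ord_rank (ord_unrank (Suc ?r) :: 'n) = Suc ?r"
    using linked_imp by simp
  then have "?lhs = inverse \<delta> ^ ?r * (lam ?r * (\<delta> ^ ?r * z $ a)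
      + (if linked ?r then \<delta> ^ Suc ?r * z $ ord_unrank (Suc ?r) else 0))"
    by (simp add: matrix_vector_mul_assoc[symmetric] diag_matrix_mult_vec_nth mult_vec_nth)
  also have "\<dots> = ?rhs"
    using assms by (simp add: field_simps power_inverse)
  finally show ?thesis .
qed

lemma form_bound_scaled:
  assumes "\<delta> > 0" and lam_ge: "\<And>i. i < CARD('n) \<Longrightarrow> c \<le> Re (lam i)"
    and linked_ge: "\<And>i. linked i \<Longrightarrow> c + \<delta> \<le> Re (lam i)"
  shows "\<exists>R. pos_def R \<and> (\<forall>y. c * (y \<bullet> (R *v y)) \<le> y \<bullet> (R *v (C *v y)))"
proof -
  let ?\<delta> = "complex_of_real \<delta>"
  define D :: "complex^('n::{finite,wellorder})^('n::{finite,wellorder})"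
    where "D = diag_matrix (\<lambda>a. ?\<delta> ^ ord_rank a)"
  define D' :: "complex^('n::{finite,wellorder})^('n::{finite,wellorder})"
    where "D' = diag_matrix (\<lambda>a. inverse ?\<delta> ^ ord_rank a)"
  define M where "M = D' ** Q"
  have "D ** D' = mat 1"
    using \<open>\<delta> > 0\<close>
    by (simp add: D_def D'_def diag_matrix_mult power_mult_distrib[symmetric] diag_matrix_one)
  then have "D ** (D' ** X) = X" for X :: "complex^('n::{finite,wellorder})^('n::{finite,wellorder})"
    by (simp add: matrix_mul_assoc)
  moreover have "Q ** (P ** X) = X" for X :: "complex^('n::{finite,wellorder})^('n::{finite,wellorder})"
    by (simp add: matrix_mul_assoc left_inverse)
  ultimately have M_C: "M ** cmat C = (D' ** J ** D) ** M" and P_D_M: "P ** D ** M = mat 1"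
    by (simp_all add: M_def cmat_eq matrix_mul_assoc[symmetric] right_inverse)
  have "pos_def (gram_form M)"
  proof (rule pos_def_gram_form)
    fix x assume "M *v of_real_vec x = 0"
    then have "(P ** D ** M) *v of_real_vec x = 0" by (simp flip: matrix_vector_mul_assoc)
    then show "x = 0" using P_D_M by simp
  qed
  moreover have "c * (y \<bullet> (gram_form M *v y)) \<le> y \<bullet> (gram_form M *v (C *v y))" for y
  proof -
    define z where "z = M *v of_real_vec y"
    have "y \<bullet> (gram_form M *v (C *v y)) = Re (\<Sum>a\<in>UNIV. cnj (z $ a) * ((D' ** J ** D) *v z) $ a)"
      unfolding inner_gram_form of_real_vec_mult z_def by (simp add: matrix_vector_mul_assoc M_C)
    also have "\<dots> = Re (\<Sum>i<CARD('n). cnj (z $ ord_unrank i) * ((D' ** J ** D) *v z) $ ord_unrank i)"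
      by (simp only: sum_ord_unrank)
    also have "\<dots> = Re (\<Sum>i<CARD('n). cnj (z $ ord_unrank i)
        * (lam i * z $ ord_unrank i + (if linked i then ?\<delta> * z $ ord_unrank (Suc i) else 0)))"
      using \<open>\<delta> > 0\<close> by (intro arg_cong[where f = Re] sum.cong refl)
        (simp add: D_def D'_def scaled_jordan_mult_nth)
    finally have form: "y \<bullet> (gram_form M *v (C *v y)) = \<dots>" .
    have norm: "y \<bullet> (gram_form M *v y) = (\<Sum>i<CARD('n). (cmod (z $ ord_unrank i))\<^sup>2)"
      unfolding gram_form_quadratic z_def by (rule sum_ord_unrank)
    have "c * (\<Sum>i<CARD('n). (cmod (z $ ord_unrank i))\<^sup>2) \<le> Re (\<Sum>i<CARD('n). cnj (z $ ord_unrank i)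
        * (lam i * z $ ord_unrank i + (if linked i then ?\<delta> * z $ ord_unrank (Suc i) else 0)))"
    proof (rule bidiagonal_form_ge)
      show "c \<le> Re (lam i)" if "i < CARD('n)" for i using lam_ge[OF that] .
      show "Suc i < CARD('n) \<and> c + \<delta> \<le> Re (lam i) \<and> c + \<delta> \<le> Re (lam (Suc i))" if "linked i" for i
        using linked_imp[OF that] linked_ge[OF that] by simp
    qed (use \<open>\<delta> > 0\<close> in simp)
    then show ?thesis unfolding form norm .
  qed
  ultimately show ?thesis by blast
qed

lemma form_bound_exists:
  assumes "\<And>i. i < CARD('n) \<Longrightarrow> c \<le> Re (lam i)" and "\<And>i. linked i \<Longrightarrow> c < Re (lam i)"
  shows "\<exists>R. pos_def R \<and> (\<forall>y. c * (y \<bullet> (R *v y)) \<le> y \<bullet> (R *v (C *v y)))"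
proof (rule form_bound_scaled)
  let ?gaps = "insert 1 ((\<lambda>i. Re (lam i) - c) ` {i. linked i})"
  have "{i. linked i} \<subseteq> {..<CARD('n)}" using linked_less_card by blast
  then have "finite ?gaps" by (simp add: finite_subset)
  then show "Min ?gaps > 0" using assms(2) by (simp add: Min_gr_iff)
  show "c + Min ?gaps \<le> Re (lam i)" if "linked i" for i
  proof -
    have "Min ?gaps \<le> Re (lam i) - c" using \<open>finite ?gaps\<close> that by (intro Min_le) auto
    then show ?thesis by simp
  qed
qed (rule assms(1))

end

section \<open>The matrix inequality for \<open>Q\<close>\<close>

lemma pos_def_imp_inj: "pos_def K \<Longrightarrow> K *v x = 0 \<Longrightarrow> x = 0"
  unfolding pos_def_def by (metis inner_zero_right less_irrefl)

lemma pos_def_matrix_inv: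
  fixes K :: "real^'n^'n"
  assumes "pos_def K"
  shows "K ** matrix_inv K = mat 1" and "matrix_inv K ** K = mat 1"
    and "transpose (matrix_inv K) = matrix_inv K"
proof -
  have "invertible K"
    using pos_def_imp_inj[OF assms] matrix_left_invertible_ker invertible_left_inverse by blast
  then show K_inv: "K ** matrix_inv K = mat 1" and inv_K: "matrix_inv K ** K = mat 1"
    unfolding invertible_def matrix_inv_def by (metis (mono_tags, lifting) someI_ex)+
  have "transpose K = K" using assms by (simp add: pos_def_def sym_mat_def)
  then have "transpose (matrix_inv K) ** K = mat 1"
    using arg_cong[OF K_inv, of transpose] by (simp add: matrix_transpose_mul)
  then have "transpose (matrix_inv K) ** (K ** matrix_inv K) = matrix_inv K"
    by (simp add: matrix_mul_assoc)
  then show "transpose (matrix_inv K) = matrix_inv K" by (simp add: K_inv)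
qed

lemma inner_matrix_transpose: "(x::real^'n) \<bullet> (A *v y) = (transpose A *v x) \<bullet> y"
  by (simp add: dot_lmul_matrix)

lemma inner_symmetric_sandwich:
  fixes K A :: "real^'n^'n"
  assumes "transpose K = K"
  shows "x \<bullet> ((K ** A ** K) *v x) = (K *v x) \<bullet> (A *v (K *v x))"
proof -
  have "x \<bullet> ((K ** A ** K) *v x) = x \<bullet> (K *v (A *v (K *v x)))"
    by (simp add: matrix_vector_mul_assoc matrix_mul_assoc)
  also have "\<dots> = (K *v x) \<bullet> (A *v (K *v x))"
    by (subst inner_matrix_transpose) (simp only: assms)
  finally show ?thesis .
qed

lemma Qmat_sandwich:
  fixes K R C :: "real^'n^'n"
  assumes "pos_def K"
  shows "Qmat K C ** (K ** R ** K) = K ** (transpose C ** R) ** K"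
    and "(K ** R ** K) ** transpose (Qmat K C) = K ** (R ** C) ** K"
proof -
  have "matrix_inv K ** (K ** X) = X" "K ** (matrix_inv K ** X) = X" for X :: "real^'n^'n"
    using pos_def_matrix_inv[OF assms] by (simp_all add: matrix_mul_assoc)
  moreover have "transpose K = K" using assms by (simp add: pos_def_def sym_mat_def)
  ultimately show "Qmat K C ** (K ** R ** K) = K ** (transpose C ** R) ** K"
    and "(K ** R ** K) ** transpose (Qmat K C) = K ** (R ** C) ** K"
    using pos_def_matrix_inv(3)[OF assms]
    by (simp_all add: Qmat_def matrix_transpose_mul matrix_mul_assoc[symmetric])
qed

lemma inner_transpose_mult_symmetric:
  fixes C R :: "real^'n^'n"
  assumes "transpose R = R"
  shows "u \<bullet> ((transpose C ** R) *v u) = u \<bullet> (R *v (C *v u))"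
proof -
  have "u \<bullet> ((transpose C ** R) *v u) = (C *v u) \<bullet> (R *v u)"
    by (simp only: matrix_vector_mul_assoc[symmetric] inner_matrix_transpose[of u "transpose C"]
        transpose_transpose)
  also have "\<dots> = u \<bullet> (R *v (C *v u))"
    by (subst inner_commute) (simp add: inner_matrix_transpose[of u R] assms)
  finally show ?thesis .
qed

lemma Qmat_inequality_of_form_bound:
  fixes K R C :: "real^'n^'n"
  assumes K: "pos_def K" and R: "pos_def R"
    and bound: "\<And>y. c * (y \<bullet> (R *v y)) \<le> y \<bullet> (R *v (C *v y))"
  shows "\<exists>P. pos_def P \<and> mat_ge (Qmat K C ** P + P ** transpose (Qmat K C)) ((2 * c) *\<^sub>R P)"
proof (intro exI conjI)
  let ?P = "K ** R ** K"
  have K_sym: "transpose K = K" and R_sym: "transpose R = R"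
    using K R by (simp_all add: pos_def_def sym_mat_def)
  show "mat_ge (Qmat K C ** ?P + ?P ** transpose (Qmat K C)) ((2 * c) *\<^sub>R ?P)"
    unfolding mat_ge_def
  proof
    fix x :: "real^'n"
    let ?u = "K *v x"
    have "x \<bullet> ((Qmat K C ** ?P + ?P ** transpose (Qmat K C) - (2 * c) *\<^sub>R ?P) *v x)
        = 2 * (?u \<bullet> (R *v (C *v ?u))) - 2 * c * (?u \<bullet> (R *v ?u))"
      unfolding Qmat_sandwich[OF K] matrix_vector_mult_diff_rdistrib matrix_vector_mult_add_rdistrib
        scaleR_matrix_vector_assoc[symmetric] inner_diff_right inner_add_right inner_scaleR_right
        inner_symmetric_sandwich[OF K_sym] inner_transpose_mult_symmetric[OF R_sym]
      by (simp add: matrix_vector_mul_assoc matrix_mul_assoc)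
    then show "0 \<le> x \<bullet> ((Qmat K C ** ?P + ?P ** transpose (Qmat K C) - (2 * c) *\<^sub>R ?P) *v x)"
      using bound[of ?u] by simp
  qed
  show "pos_def ?P"
    unfolding pos_def_def sym_mat_def
  proof (intro conjI allI impI)
    show "transpose ?P = ?P" by (simp add: matrix_transpose_mul K_sym R_sym matrix_mul_assoc)
    fix x :: "real^'n" assume "x \<noteq> 0"
    then have "K *v x \<noteq> 0" using pos_def_imp_inj[OF K] by blast
    then show "0 < x \<bullet> (?P *v x)"
      using R by (simp add: inner_symmetric_sandwich[OF K_sym] pos_def_def)
  qed
qed

context jordan_decomposition
begin

lemma Qmat_inequality:
  assumes "pos_def K" and "c \<le> mu C" and "\<And>i. linked i \<Longrightarrow> c < Re (lam i)"
  shows "\<exists>P. pos_def P \<and> mat_ge (Qmat K C ** P + P ** transpose (Qmat K C)) ((2 * c) *\<^sub>R P)"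
proof -
  have "c \<le> Re (lam i)" if "i < CARD('n)" for i using mu_le_Re[OF that] assms(2) by simp
  then obtain R where "pos_def R" "\<And>y. c * (y \<bullet> (R *v y)) \<le> y \<bullet> (R *v (C *v y))"
    using form_bound_exists assms(3) by blast
  then show ?thesis using Qmat_inequality_of_form_bound[OF \<open>pos_def K\<close>] by blast
qed

lemma Qmat_inequality_mu:
  assumes "pos_def K" and "\<forall>lam \<in> cspec C. Re lam = mu C \<longrightarrow> \<not> defective C lam"
  shows "\<exists>P. pos_def P \<and> mat_ge (Qmat K C ** P + P ** transpose (Qmat K C)) ((2 * mu C) *\<^sub>R P)"
proof (rule Qmat_inequality[OF \<open>pos_def K\<close> order_refl])
  fix i assume "linked i"
  then have "i < CARD('n)" by (rule linked_less_card)
  then have "Re (lam i) \<noteq> mu C"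
    using assms(2) defective_if_linked[OF \<open>linked i\<close>] lam_in_cspec by blast
  then show "mu C < Re (lam i)" using mu_le_Re[OF \<open>i < CARD('n)\<close>] by simp
qed

lemma Qmat_inequality_below_mu:
  assumes "pos_def K" and "\<epsilon> > 0"
  shows "\<exists>P. pos_def P \<and> mat_ge (Qmat K C ** P + P ** transpose (Qmat K C)) ((2 * (mu C - \<epsilon>)) *\<^sub>R P)"
proof (rule Qmat_inequality[OF \<open>pos_def K\<close>])
  fix i assume "linked i"
  then show "mu C - \<epsilon> < Re (lam i)" using mu_le_Re[OF linked_less_card] \<open>\<epsilon> > 0\<close> by force
qed (use \<open>\<epsilon> > 0\<close> in simp)

end

section \<open>Finiteness of \<open>S\<^sub>\<psi>\<close>\<close>

lemma finf_borel_measurable [measurable]: "finf K \<in> borel_measurable borel"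
  unfolding finf_def by (intro borel_measurable_continuous_onI continuous_intros) auto

lemma inner_matrix_vector_le_onorm: "(x::real^'n) \<bullet> (A *v x) \<le> onorm ((*v) A) * (norm x)\<^sup>2"
proof -
  have "x \<bullet> (A *v x) \<le> norm x * norm (A *v x)" by (rule norm_cauchy_schwarz)
  also have "\<dots> \<le> norm x * (onorm ((*v) A) * norm x)"
    by (rule mult_left_mono[OF onorm[OF matrix_vector_mul_bounded_linear] norm_ge_zero])
  finally show ?thesis by (simp add: power2_eq_square mult_ac)
qed

lemma S_psi_finite:
  assumes "psi_compatible_grad \<psi> K f0 g"
  shows "S_psi K P g < \<infinity>"
proof -
  let ?B = "onorm ((*v) P)"
  have g: "g \<in> borel_measurable lborel"
    and fin: "(\<integral>\<^sup>+x. ennreal ((norm (g x))\<^sup>2 * finf K x) \<partial>lborel) < \<infinity>"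
    using assms unfolding psi_compatible_grad_def by auto
  have finf_nonneg: "finf K x \<ge> 0" for x by (simp add: finf_def)
  have "g x \<bullet> (P *v g x) * finf K x \<le> ?B * ((norm (g x))\<^sup>2 * finf K x)" for x
    using mult_right_mono[OF inner_matrix_vector_le_onorm finf_nonneg] by (simp add: mult.assoc)
  then have "ennreal (g x \<bullet> (P *v g x) * finf K x) \<le> ennreal ?B * ennreal ((norm (g x))\<^sup>2 * finf K x)"
    for x
    using finf_nonneg[of x] onorm_pos_le[OF matrix_vector_mul_bounded_linear, of P]
    by (simp add: ennreal_mult[symmetric] ennreal_leI)
  then show ?thesis
    unfolding S_psi_def using g by (intro nn_integral_mult_bounded_inf[OF _ fin]) auto
qed

theorem lemma4p3:
  fixes C K :: "real^('n::{finite,wellorder})^('n::{finite,wellorder})" and k :: nat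
  assumes "CARD('n) \<ge> 2" and "1 \<le> k" and "k < CARD('n)"
    and "condA (Dmat k) C"
    and "pos_def K"
    and "2 *\<^sub>R Dmat k = C ** K + K ** transpose C"
  shows "((\<forall>lam \<in> cspec C. Re lam = mu C \<longrightarrow> \<not> defective C lam) \<longrightarrow>
           (\<exists>P. pos_def P \<and> mat_ge (Qmat K C ** P + P ** transpose (Qmat K C)) ((2 * mu C) *\<^sub>R P)))
       \<and> ((\<exists>lam \<in> cspec C. Re lam = mu C \<and> defective C lam) \<longrightarrow>
           (\<forall>\<epsilon>>0. \<exists>P. pos_def P \<and>
              mat_ge (Qmat K C ** P + P ** transpose (Qmat K C)) ((2 * (mu C - \<epsilon>)) *\<^sub>R P)))
       \<and> (\<forall>P \<psi> f0 g. pos_def P \<and>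
             (\<exists>\<epsilon>\<ge>0. mat_ge (Qmat K C ** P + P ** transpose (Qmat K C)) ((2 * (mu C - \<epsilon>)) *\<^sub>R P))
             \<and> admissible \<psi> \<and> initial_datum \<psi> f0 \<and> psi_compatible_grad \<psi> K f0 g
             \<longrightarrow> S_psi K P g < \<infinity>)"
proof -
  obtain J lam linked P Q where "jordan_decomposition J lam linked C P Q"
    using jordan_decomposition_exists by blast
  then interpret jordan_decomposition J lam linked C P Q .
  show ?thesis
    using Qmat_inequality_mu[OF \<open>pos_def K\<close>] Qmat_inequality_below_mu[OF \<open>pos_def K\<close>] S_psi_finite
    by blast
qed

end
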